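(* In the standing setting, if $\lim_{t\to T_*}\dot S(t)>0$, then $T_*<\infty$.
   Context: Standing setting: Fix $\lambda\in\mathbb{R}\setminus\{-1\}$ and a nonzero bounded measurable function $\gamma_0:\mathbb{T}^2\to\mathbb{R}$ of zero mean, $\mathbb{T}^2=[0,2\pi)^2$. For $f$ on $\mathbb{T}^2$ let $\langle f\rangle_0=\frac{1}{4\pi^2}\int_{\mathbb{T}^2}f(X_0,Y_0)\,\mathrm{d}X_0\mathrm{d}Y_0$. Let $\gamma_+=\sup\gamma_0>0$, $\gamma_-=\inf\gamma_0<0$. Define $S_*>0$ by $1/S_*=-(\lambda+1)\gamma_+$ if $\lambda<-1$ and $1/S_*=-(\lambda+1)\gamma_-$ if $\lambda>-1$. Let $S(t)$ solve $\dot S=\langle[1+(\lambda+1)\gamma_0(\cdot)S]^{-\frac{1}{\lambda+1}}\rangle_0^{-2(\lambda+1)}$, $S(0)=0$, on the maximal time interval $[0,T_* )$ on which $S(t)<S_*$; $T_*\in(0,\infty]$ is the singularity time. *)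

theory Defs
  imports "HOL-Analysis.Analysis"
begin

definition torus2 :: "(real \<times> real) set" where
  "torus2 = {0..<2*pi} \<times> {0..<2*pi}"

definition mean0 :: "(real \<times> real \<Rightarrow> real) \<Rightarrow> real" where
  "mean0 f = (LINT x:torus2|lborel. f x) / (4 * pi^2)"

definition gamma_plus :: "(real \<times> real \<Rightarrow> real) \<Rightarrow> real" where
  "gamma_plus g = (SUP x\<in>torus2. g x)"

definition gamma_minus :: "(real \<times> real \<Rightarrow> real) \<Rightarrow> real" where
  "gamma_minus g = (INF x\<in>torus2. g x)"

definition Sstar :: "real \<Rightarrow> (real \<times> real \<Rightarrow> real) \<Rightarrow> real" where
  "Sstar lam g = (if lam < -1 then 1 / (-(lam+1) * gamma_plus g)
                  else 1 / (-(lam+1) * gamma_minus g))"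

definition rhsS :: "real \<Rightarrow> (real \<times> real \<Rightarrow> real) \<Rightarrow> real \<Rightarrow> real" where
  "rhsS lam g s =
     (mean0 (\<lambda>x. (1 + (lam+1) * g x * s) powr (-1/(lam+1)))) powr (-2*(lam+1))"

definition is_solution ::
  "real \<Rightarrow> (real \<times> real \<Rightarrow> real) \<Rightarrow> (real \<Rightarrow> real) \<Rightarrow> ereal \<Rightarrow> bool" where
  "is_solution lam g S T \<longleftrightarrow> S 0 = 0 \<and>
     (\<forall>t. 0 \<le> t \<and> ereal t < T \<longrightarrow>
        (S has_real_derivative rhsS lam g (S t)) (at t within {0..}) \<and> S t < Sstar lam g)"

definition approach :: "ereal \<Rightarrow> real filter" where
  "approach T = (if T = \<infinity> then at_top else at_left (real_of_ereal T))"

end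

theory Submission
  imports Defs "HOL-Real_Asymp.Real_Asymp"
begin

text \<open>If T_* were infinite, the derivative of S would eventually exceed half its positive limit,
so S would grow at least linearly and could not stay below the finite bound S_*.\<close>

lemma DERIV_ge_imp_linear_lower_bound:
  fixes f f' :: "real \<Rightarrow> real"
  assumes "a \<le> b"
    and deriv: "\<And>x. a \<le> x \<Longrightarrow> x \<le> b \<Longrightarrow> (f has_real_derivative f' x) (at x)"
    and ge: "\<And>x. a < x \<Longrightarrow> x < b \<Longrightarrow> c \<le> f' x"
  shows "f a + c * (b - a) \<le> f b"
proof -
  have "f a - c * a \<le> f b - c * b"
  proof (rule DERIV_nonneg_imp_increasing_open[OF \<open>a \<le> b\<close>])
    fix x assume x: "a < x" "x < b"
    have "((\<lambda>t. f t - c * t) has_real_derivative f' x - c) (at x)"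
      using deriv[of x] x by (auto intro!: derivative_eq_intros)
    then show "\<exists>y. ((\<lambda>t. f t - c * t) has_real_derivative y) (at x) \<and> 0 \<le> y"
      using ge[OF x] by auto
  next
    show "continuous_on {a..b} (\<lambda>t. f t - c * t)"
      using deriv by (intro continuous_at_imp_continuous_on ballI continuous_intros DERIV_isCont) auto
  qed
  then show ?thesis by (simp add: algebra_simps)
qed

lemma filterlim_at_top_if_deriv_tendsto_pos:
  fixes f f' :: "real \<Rightarrow> real"
  assumes deriv: "\<forall>\<^sub>F x in at_top. (f has_real_derivative f' x) (at x)"
    and lim: "(f' \<longlongrightarrow> L) at_top" and "L > 0"
  shows "filterlim f at_top at_top"
proof -
  have "\<forall>\<^sub>F x in at_top. (f has_real_derivative f' x) (at x) \<and> L/2 < f' x"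
    using deriv order_tendstoD(1)[OF lim, of "L/2"] \<open>L > 0\<close> by (auto elim: eventually_elim2)
  then obtain N where N: "\<And>x. x \<ge> N \<Longrightarrow> (f has_real_derivative f' x) (at x) \<and> L/2 < f' x"
    by (auto simp: eventually_at_top_linorder)
  have "filterlim (\<lambda>t. f N + L/2 * (t - N)) at_top at_top"
    using \<open>L > 0\<close> by real_asymp
  moreover have "\<forall>\<^sub>F t in at_top. f N + L/2 * (t - N) \<le> f t"
    unfolding eventually_at_top_linorder
    by (rule exI[of _ N], intro allI impI DERIV_ge_imp_linear_lower_bound) (use N in \<open>auto intro: less_imp_le\<close>)
  ultimately show ?thesis
    by (rule filterlim_at_top_mono)
qed

theorem lemma4p2:
  fixes lam :: real and g :: "real \<times> real \<Rightarrow> real"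
    and S :: "real \<Rightarrow> real" and Tstar :: ereal
  assumes lam: "lam \<noteq> -1"
    and meas: "g \<in> borel_measurable lborel"
    and bdd: "\<exists>B. \<forall>x\<in>torus2. \<bar>g x\<bar> \<le> B"
    and nonzero: "\<exists>x\<in>torus2. g x \<noteq> 0"
    and mean_zero: "mean0 g = 0"
    and Tpos: "0 < Tstar"
    and sol: "is_solution lam g S Tstar"
    and maximal: "\<forall>T' S'. Tstar < T' \<longrightarrow> \<not> is_solution lam g S' T'"
    and lim: "\<exists>L>0. ((\<lambda>t. rhsS lam g (S t)) \<longlongrightarrow> L) (approach Tstar)"
  shows "Tstar < \<infinity>"
proof (rule ccontr)
  assume "\<not> Tstar < \<infinity>"
  then have T: "Tstar = \<infinity>" by simp
  obtain L where "L > 0" and L: "((\<lambda>t. rhsS lam g (S t)) \<longlongrightarrow> L) at_top"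
    using lim T by (auto simp: approach_def)
  have deriv: "(S has_real_derivative rhsS lam g (S t)) (at t)" if "t > 0" for t
  proof -
    have "(S has_real_derivative rhsS lam g (S t)) (at t within {0..})"
      using sol that T by (simp add: is_solution_def)
    moreover have "at t within {0..} = at t"
      using that by (intro at_within_interior) simp
    ultimately show ?thesis by simp
  qed
  have "\<forall>\<^sub>F t in at_top. (S has_real_derivative rhsS lam g (S t)) (at t)"
    using eventually_gt_at_top[of 0] by eventually_elim (rule deriv)
  then have "\<forall>\<^sub>F t in at_top. Sstar lam g < S t"
    using filterlim_at_top_if_deriv_tendsto_pos[OF _ L \<open>L > 0\<close>] filterlim_at_top_dense by blast
  moreover have "\<forall>\<^sub>F t in at_top. S t < Sstar lam g"
    using eventually_ge_at_top[of 0] by eventually_elim (use sol T in \<open>auto simp: is_solution_def\<close>)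
  ultimately have "\<forall>\<^sub>F t in at_top. S t < S t"
    by eventually_elim simp
  then show False by simp
qed

end
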